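(* Let $d=1$. There is a constant $C$ such that for every admissible ball (interval) $B$ and every $y\in B$, $$ r_B\int_{\mathbb R\setminus 2B}\Big|\int_0^1\frac{r\,\partial_y\big(\psi(r,x,y)\,e^{-\phi(r,x,y)^2}\big)}{1-r^2}\,d\rho(r)\Big|\,dx\le C.$$
   Context: For $x,y\in\mathbb R$ and $r\in(0,1)$: $$\phi(r,x,y)=\frac{ry-x}{\sqrt{1-r^2}},\qquad \psi(r,x,y)=\frac{rx-y}{\sqrt{1-r^2}}.$$ The measure $\rho$ on $(0,1)$ is $d\rho(r)=\dfrac{dr}{r\sqrt{-\log r}}$. A ball (interval) $B$ with centre $c_B$ and radius $r_B$ is admissible if $r_B\le\min(1,1/|c_B|)$. $2B$ denotes the ball with the same centre and radius $2r_B$. *)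

theory Defs
  imports "HOL-Analysis.Analysis"
begin

definition phi :: "real \<Rightarrow> real \<Rightarrow> real \<Rightarrow> real" where
  "phi r x y = (r * y - x) / sqrt (1 - r\<^sup>2)"

definition psi :: "real \<Rightarrow> real \<Rightarrow> real \<Rightarrow> real" where
  "psi r x y = (r * x - y) / sqrt (1 - r\<^sup>2)"

definition rho :: "real measure" where
  "rho = density (restrict_space lborel {0<..<1}) (\<lambda>r. ennreal (1 / (r * sqrt (- ln r))))"

text \<open>Admissible ball (interval) with centre c and radius s: 0 < s and s \<le> min 1 (1/|c|),
  where 1/|0| is read as +infinity.\<close>
definition admissible :: "real \<Rightarrow> real \<Rightarrow> bool" where
  "admissible c s \<longleftrightarrow> 0 < s \<and> s \<le> 1 \<and> s * \<bar>c\<bar> \<le> 1"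

definition kern :: "real \<Rightarrow> real \<Rightarrow> real \<Rightarrow> real" where
  "kern x y r = r * deriv (\<lambda>t. psi r x t * exp (- (phi r x t)\<^sup>2)) y / (1 - r\<^sup>2)"

end

theory Submission
  imports Defs "HOL-Real_Asymp.Real_Asymp"
begin

text \<open>
  Write sig r = sqrt (1 - r^2), lam r = sqrt (-ln r), so that phi = (r y - x) / sig r,
  psi = (r x - y) / sig r and the density of rho on (0,1) is 1 / (r lam r).

  The proof rests on an exact primitive.  Multiplying the integrand kern by the density
  of rho gives a function kdens, and with the Gaussian factor gauss = exp (- phi^2) one has
    d/dr [ r gauss / (sig lam) ] = hkern - kdens,   hkern = gauss / (2 sig lam^3) \<ge> 0.
  For x \<noteq> y the bracket vanishes at r = 0 and r = 1, and hkern, kdens are bounded on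
  (0,1), so integrating over (0,1) gives  \<integral> kern d\<rho> = \<integral> hkern dr \<ge> 0 (r over (0,1)).
  The absolute value thus disappears and, by Tonelli, the x-integral can be taken first:
  for fixed r the function x \<mapsto> hkern x y r is a Gaussian of width sig r centred at r y,
  whence \<integral> hkern dx \<le> 3 (1 - r)^(-3/2), and, if 1 - r \<le> s^2/8 and y lies in the ball,
  the centre r y stays at distance \<ge> s/2 from the complement of the doubled ball, so the
  Gaussian tail gives \<integral> hkern dx \<le> 86 / s^3 over x \<notin> 2B.  Integrating these two bounds over r
  yields at most 6 / sqrt \<delta> + 86 \<delta> / s^3 with \<delta> = s^2/8, and s times this is \<le> 30.
\<close>

definition sig :: "real \<Rightarrow> real" where "sig r = sqrt (1 - r\<^sup>2)"

definition lam :: "real \<Rightarrow> real" where "lam r = sqrt (- ln r)"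

definition gauss :: "real \<Rightarrow> real \<Rightarrow> real \<Rightarrow> real" where
  "gauss x y r = exp (- ((r*y - x) / sig r)\<^sup>2)"

text \<open>The nonnegative kernel whose r-integral equals the rho-integral of kern.\<close>
definition hkern :: "real \<Rightarrow> real \<Rightarrow> real \<Rightarrow> real" where
  "hkern x y r = gauss x y r / (2 * sig r * lam r ^ 3)"

text \<open>kern multiplied by the density of rho (see kern_density_eq).\<close>
definition kdens :: "real \<Rightarrow> real \<Rightarrow> real \<Rightarrow> real" where
  "kdens x y r = gauss x y r * (-1 - 2 * r * ((r*x - y) / sig r) * ((r*y - x) / sig r)) / (sig r ^ 3 * lam r)"

text \<open>A primitive of hkern - kdens in r (see prim_deriv).\<close>
definition prim :: "real \<Rightarrow> real \<Rightarrow> real \<Rightarrow> real" where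
  "prim x y r = r * gauss x y r / (sig r * lam r)"

definition dens :: "real \<Rightarrow> real" where "dens r = 1 / (r * sqrt (- ln r))"

lemma sig_pos: "0 < r \<Longrightarrow> r < 1 \<Longrightarrow> 0 < sig r"
  unfolding sig_def by (simp add: abs_square_less_1)

lemma sig_sq: "0 < r \<Longrightarrow> r < 1 \<Longrightarrow> sig r ^ 2 = 1 - r^2"
  unfolding sig_def by (simp add: abs_square_le_1)

lemma lam_pos: "0 < r \<Longrightarrow> r < 1 \<Longrightarrow> 0 < lam r"
  unfolding lam_def by simp

lemma lam_sq_ge: "0 < r \<Longrightarrow> r < 1 \<Longrightarrow> 1 - r \<le> lam r ^ 2"
  using ln_le_minus_one[of r] unfolding lam_def by simp

lemma sig_sq_ge: "0 < r \<Longrightarrow> r < 1 \<Longrightarrow> 1 - r \<le> sig r ^ 2"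
  using sig_sq[of r] by (simp add: power2_eq_square)

lemma sig_le_1: "0 < r \<Longrightarrow> r < 1 \<Longrightarrow> sig r \<le> 1"
  unfolding sig_def by simp

lemma sig_le_lam:
  assumes r: "0 < r" "r < 1"
  shows "sig r \<le> 2 * lam r"
proof -
  have "sig r ^ 2 \<le> 2 * (1 - r)"
    using sig_sq[OF r] mult_nonneg_nonneg[of "1 - r" "1 - r"] r by (simp add: power2_eq_square algebra_simps)
  moreover have "1 - r \<le> lam r ^ 2" by (rule lam_sq_ge[OF r])
  ultimately have "sig r ^ 2 \<le> 4 * lam r ^ 2"
    using zero_le_power2[of "lam r"] by argo
  then have "sig r ^ 2 \<le> (2 * lam r) ^ 2" by (simp add: power_mult_distrib)
  then show ?thesis
    using sig_pos[OF r] lam_pos[OF r] by (meson power2_le_imp_le less_imp_le mult_nonneg_nonneg zero_le_numeral)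
qed

lemma deriv_integrand_y:
  assumes r: "0 < r" "r < 1"
  shows "deriv (\<lambda>t. psi r x t * exp (- (phi r x t)\<^sup>2)) y
     = exp (- (phi r x y)\<^sup>2) * (- 1 / sig r - 2 * psi r x y * phi r x y * r / sig r)"
proof -
  have S: "sqrt (1 - r\<^sup>2) = sig r" by (simp add: sig_def)
  have "((\<lambda>t. psi r x t * exp (- (phi r x t)\<^sup>2)) has_real_derivative
     exp (- (phi r x y)\<^sup>2) * (- 1 / sig r - 2 * psi r x y * phi r x y * r / sig r)) (at y)"
    unfolding psi_def phi_def S
    using sig_pos[OF r] by (auto intro!: derivative_eq_intros simp: field_simps power2_eq_square)
  then show ?thesis by (rule DERIV_imp_deriv)
qed

lemma kern_density_eq:
  assumes r: "0 < r" "r < 1"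
  shows "dens r * kern x y r = kdens x y r"
proof -
  have s: "0 < sig r" using sig_pos[OF r] .
  have l: "0 < lam r" using lam_pos[OF r] .
  have ss: "1 - r^2 = sig r ^ 2" using sig_sq[OF r] by simp
  show ?thesis
    unfolding kern_def deriv_integrand_y[OF r] kdens_def dens_def gauss_def
    unfolding phi_def psi_def ss lam_def[symmetric] sig_def[symmetric]
    using s l r by (simp add: field_simps power2_eq_square power3_eq_cube)
qed

lemma sig_deriv: assumes r: "0 < r" "r < 1" shows "(sig has_real_derivative (- r / sig r)) (at r)"
proof -
  have "1 - r^2 > 0" using r by (simp add: abs_square_less_1)
  then show ?thesis unfolding sig_def[abs_def]
    by (auto intro!: derivative_eq_intros simp: field_simps power2_eq_square)
qed

lemma lam_deriv: assumes r: "0 < r" "r < 1" shows "(lam has_real_derivative (- 1 / (2 * r * lam r))) (at r)"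
proof -
  have "- ln r > 0" using r by simp
  then show ?thesis unfolding lam_def[abs_def] using r
    by (auto intro!: derivative_eq_intros simp: field_simps power2_eq_square)
qed

lemma phi_deriv_r: assumes r: "0 < r" "r < 1"
  shows "((\<lambda>r. (r*y - x) / sig r) has_real_derivative (- ((r*x - y) / sig r) / sig r ^ 2)) (at r)"
proof -
  have s: "0 < sig r" using sig_pos[OF r] .
  have ss: "sig r ^ 2 = 1 - r^2" using sig_sq[OF r] .
  have "((\<lambda>r. (r*y - x) / sig r) has_real_derivative ((y * sig r - (r*y - x) * (- r / sig r)) / (sig r * sig r))) (at r)"
    by (rule derivative_eq_intros sig_deriv[OF r] refl | use s in simp)+
  moreover have "(y * sig r - (r*y - x) * (- r / sig r)) / (sig r * sig r) = - ((r*x - y) / sig r) / sig r ^ 2"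
    using s ss unfolding power2_eq_square by (simp add: field_simps; algebra)
  ultimately show ?thesis by simp
qed

lemma gauss_deriv_r: assumes r: "0 < r" "r < 1"
  shows "(gauss x y has_real_derivative (gauss x y r * (2 * ((r*y - x) / sig r) * ((r*x - y) / sig r) / sig r ^ 2))) (at r)"
proof -
  have a: "((\<lambda>u. exp (- u\<^sup>2)) has_real_derivative exp (- ((r*y - x) / sig r)\<^sup>2) * (- (2 * ((r*y - x) / sig r)))) (at ((r*y - x) / sig r))"
    by (auto intro!: derivative_eq_intros)
  have "((\<lambda>r. exp (- ((r*y - x) / sig r)\<^sup>2)) has_real_derivative
     exp (- ((r*y - x) / sig r)\<^sup>2) * (- (2 * ((r*y - x) / sig r))) * (- ((r*x - y) / sig r) / sig r ^ 2)) (at r)"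
    by (rule DERIV_chain2[OF a phi_deriv_r[OF r]])
  then show ?thesis unfolding gauss_def[abs_def] by (simp add: field_simps)
qed

lemma prim_deriv: assumes r: "0 < r" "r < 1"
  shows "(prim x y has_real_derivative (hkern x y r - kdens x y r)) (at r)"
proof -
  have s: "0 < sig r" using sig_pos[OF r] .
  have l: "0 < lam r" using lam_pos[OF r] .
  have ss: "sig r ^ 2 = 1 - r^2" using sig_sq[OF r] .
  have nz: "sig r * lam r \<noteq> 0" using s l by simp
  note d = DERIV_divide[OF DERIV_mult[OF DERIV_ident gauss_deriv_r[OF r]] DERIV_mult[OF sig_deriv[OF r] lam_deriv[OF r]] nz]
  show ?thesis unfolding prim_def[abs_def]
    by (rule DERIV_cong[OF d])
      (use s l r ss in \<open>simp add: hkern_def kdens_def field_simps power2_eq_square power3_eq_cube; algebra\<close>)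
qed

lemma exp_pow_bound:
  assumes "0 \<le> w" "0 < k"
  shows "exp (- w) * w ^ k \<le> real k ^ k"
proof -
  have "w / k \<le> exp (w / k)" using exp_ge_add_one_self[of "w/k"] by linarith
  then have "(w / k) ^ k \<le> exp (w / k) ^ k" using assms by (intro power_mono) auto
  also have "exp (w / k) ^ k = exp w" by (metis assms(2) exp_of_nat_mult nonzero_mult_div_cancel_left of_nat_0_less_iff order_less_irrefl times_divide_eq_right)
  finally have "w ^ k \<le> exp w * real k ^ k" using assms by (simp add: power_divide field_simps)
  then show ?thesis by (simp add: exp_minus field_simps)
qed

lemma one_plus_le_exp: "0 \<le> (u::real) \<Longrightarrow> exp (- u) * (1 + u) \<le> 2 * exp (- (u / 2))"
proof -
  assume u: "0 \<le> u"
  have "1 + u / 2 \<le> exp (u / 2)" by (rule exp_ge_add_one_self)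
  then have "1 + u \<le> 2 * exp (u/2)" by linarith
  then have "exp (- u) * (1 + u) \<le> exp (- u) * (2 * exp (u/2))" by (intro mult_left_mono) auto
  also have "\<dots> = 2 * exp (- (u / 2))" by (simp add: exp_minus field_simps flip: exp_add)
  finally show ?thesis .
qed

lemma gauss_moment_near_one:
  assumes r: "0 < r" "r < 1" and xy: "x \<noteq> y" and A: "(1 - r) * \<bar>y\<bar> \<le> \<bar>x - y\<bar> / 2"
  shows "gauss x y r * (1 + ((r*y - x) / sig r)\<^sup>2) \<le> 27648 / \<bar>x - y\<bar> ^ 6 * sig r ^ 6"
proof -
  define S where "S = sig r"
  define D where "D = \<bar>x - y\<bar>"
  define u where "u = ((r*y - x) / S)\<^sup>2"
  have S: "0 < S" using sig_pos[OF r] by (simp add: S_def)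
  have D: "0 < D" using xy by (simp add: D_def)
  have "\<bar>y - x\<bar> \<le> \<bar>r*y - x\<bar> + \<bar>(1-r)*y\<bar>"
    using abs_triangle_ineq[of "r*y - x" "(1-r)*y"] by (simp add: algebra_simps)
  also have "\<bar>(1-r)*y\<bar> = (1 - r) * \<bar>y\<bar>" using r by (simp add: abs_mult)
  finally have h1: "D / 2 \<le> \<bar>r*y - x\<bar>" using A by (simp add: D_def abs_minus_commute)
  have "(D/2)^2 \<le> \<bar>r*y - x\<bar>^2" using h1 D by (intro power_mono) auto
  then have "D^2 / 4 \<le> (r*y - x)^2" by (simp add: power_divide)
  then have "D^2 / 4 / S^2 \<le> (r*y - x)^2 / S^2" using S by (intro divide_right_mono) auto
  then have hu: "D^2 / (4 * S^2) \<le> u" by (simp add: u_def power_divide)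
  have u0: "0 \<le> u" by (simp add: u_def)
  define w where "w = D^2 / (8 * S^2)"
  have w0: "0 < w" using D S by (simp add: w_def)
  have wu: "w \<le> u / 2" using hu by (simp add: w_def field_simps)
  have "gauss x y r * (1 + u) = exp (- u) * (1 + u)" by (simp add: gauss_def u_def S_def)
  also have "\<dots> \<le> 2 * exp (- (u/2))" by (rule one_plus_le_exp[OF u0])
  also have "\<dots> \<le> 2 * exp (- w)" using wu by simp
  also have "exp (- w) \<le> 27 / w ^ 3"
    using exp_pow_bound[of w 3] w0 by (simp add: field_simps)
  also have "27 / w ^ 3 = 27 * 512 * S ^ 6 / D ^ 6"
    using S D by (simp add: w_def field_simps power_mult_distrib)
  finally have "gauss x y r * (1 + u) \<le> 2 * (27 * 512 * S ^ 6 / D ^ 6)" by simp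
  then show ?thesis by (simp add: u_def S_def D_def)
qed

lemma sig_lower_bound:
  assumes r: "0 < r" "r < 1" and far: "\<bar>x - y\<bar> / 2 < (1 - r) * \<bar>y\<bar>"
  shows "\<bar>x - y\<bar> / (2 * \<bar>y\<bar> + 1) < sig r"
proof -
  have pos: "0 < 2 * \<bar>y\<bar> + 1" by (simp add: add_pos_nonneg)
  have "\<bar>x - y\<bar> < (1 - r) * (2 * \<bar>y\<bar>)" using far by simp
  also have "\<dots> \<le> (1 - r) * (2 * \<bar>y\<bar> + 1)" using r by (intro mult_left_mono) auto
  finally have "\<bar>x - y\<bar> / (2 * \<bar>y\<bar> + 1) < 1 - r" by (simp add: pos_divide_less_eq[OF pos])
  also have "1 - r \<le> sig r ^ 2" by (rule sig_sq_ge[OF r])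
  also have "sig r ^ 2 \<le> sig r"
    using sig_pos[OF r] sig_le_1[OF r] by (simp add: power2_eq_square mult_le_cancel_right1)
  finally show ?thesis .
qed

text \<open>For x \<noteq> y the Gaussian factor (times 1 + phi^2) is O(sig r ^ 5) uniformly on (0,1):
  near r = 1 by gauss_moment_near_one, elsewhere because sig r is bounded below.\<close>
lemma gauss_moment_bound:
  assumes xy: "x \<noteq> y"
  shows "\<exists>M\<ge>0. \<forall>r. 0 < r \<and> r < 1 \<longrightarrow> gauss x y r * (1 + ((r*y - x) / sig r)\<^sup>2) \<le> M * sig r ^ 5"
proof -
  define D where "D = \<bar>x - y\<bar>"
  define m where "m = D / (2 * \<bar>y\<bar> + 1)"
  have D: "0 < D" using xy by (simp add: D_def)
  have m: "0 < m" using D by (simp add: m_def add_pos_nonneg)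
  define M where "M = 27648 / D ^ 6 + 1 / m ^ 5"
  have M0: "0 \<le> M" using D m by (simp add: M_def)
  show ?thesis
  proof (intro exI[of _ M] conjI allI impI M0, elim conjE)
    fix r :: real assume r: "0 < r" "r < 1"
    define S where "S = sig r"
    have S: "0 < S" "S \<le> 1" using sig_pos[OF r] sig_le_1[OF r] by (auto simp: S_def)
    show "gauss x y r * (1 + ((r*y - x) / sig r)\<^sup>2) \<le> M * sig r ^ 5"
    proof (cases "(1 - r) * \<bar>y\<bar> \<le> \<bar>x - y\<bar> / 2")
      case True
      have "gauss x y r * (1 + ((r*y - x) / sig r)\<^sup>2) \<le> 27648 / D ^ 6 * S ^ 6"
        using gauss_moment_near_one[OF r xy True] by (simp add: D_def S_def)
      also have "\<dots> \<le> 27648 / D ^ 6 * S ^ 5"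
        using S D by (intro mult_left_mono) (auto simp: power_decreasing)
      also have "\<dots> \<le> M * S ^ 5"
        using S m by (intro mult_right_mono) (auto simp: M_def)
      finally show ?thesis by (simp add: S_def)
    next
      case False
      then have mS: "m < S" using sig_lower_bound[OF r] by (simp add: m_def D_def S_def)
      have "1 + ((r*y - x) / sig r)\<^sup>2 \<le> exp (((r*y - x) / sig r)\<^sup>2)" by (rule exp_ge_add_one_self)
      then have "gauss x y r * (1 + ((r*y - x) / sig r)\<^sup>2) \<le> 1" by (simp add: gauss_def exp_minus field_simps)
      also have "1 \<le> S ^ 5 / m ^ 5" using mS m by (simp add: power_strict_mono less_imp_le)
      also have "\<dots> \<le> M * S ^ 5" using D m S by (simp add: M_def field_simps)
      finally show ?thesis by (simp add: S_def)
    qed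
  qed
qed

lemma hkern_nonneg: "0 < r \<Longrightarrow> r < 1 \<Longrightarrow> 0 \<le> hkern x y r"
  using sig_pos[of r] lam_pos[of r] by (simp add: hkern_def gauss_def)

lemma hkern_bounded:
  assumes r: "0 < r" "r < 1" and M: "0 \<le> M"
    and Q: "gauss x y r * (1 + ((r*y - x) / sig r)\<^sup>2) \<le> M * sig r ^ 5"
  shows "0 \<le> hkern x y r \<and> hkern x y r \<le> 4 * M"
proof -
  define S where "S = sig r"
  define L where "L = lam r"
  have S: "0 < S" "S \<le> 1" "S \<le> 2 * L" using sig_pos[OF r] sig_le_1[OF r] sig_le_lam[OF r] by (auto simp: S_def L_def)
  have L: "0 < L" using lam_pos[OF r] by (simp add: L_def)
  have E0: "0 \<le> gauss x y r" by (simp add: gauss_def)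
  have "gauss x y r \<le> gauss x y r * (1 + ((r*y - x) / sig r)\<^sup>2)" using E0 by (simp add: mult_le_cancel_left1)
  with Q have E: "gauss x y r \<le> M * S ^ 5" by (simp add: S_def)
  have "S ^ 3 \<le> (2 * L) ^ 3" using S by (intro power_mono) auto
  then have "S ^ 3 \<le> 8 * L ^ 3" by (simp add: power_mult_distrib)
  then have "S * S ^ 3 \<le> S * (8 * L ^ 3)" using S by (intro mult_left_mono) auto
  moreover have "S ^ 5 \<le> S * S ^ 3" using S by (simp add: power_decreasing eval_nat_numeral mult_le_cancel_left1 mult_le_one)
  ultimately have "S ^ 5 \<le> 4 * (2 * S * L ^ 3)" by simp
  then have "M * S ^ 5 \<le> M * (4 * (2 * S * L ^ 3))" using M by (intro mult_left_mono) auto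
  with E have "gauss x y r \<le> 4 * M * (2 * S * L ^ 3)" by simp
  then have "gauss x y r / (2 * S * L ^ 3) \<le> 4 * M" using S L by (simp add: pos_divide_le_eq)
  then show ?thesis using S L E0 by (simp add: hkern_def S_def L_def)
qed

lemma kdens_factor_le:
  assumes r: "0 < r" "r < 1"
  shows "\<bar>-1 - 2 * r * ((r*x - y) / sig r) * ((r*y - x) / sig r)\<bar>
    \<le> (1 + 2 * (\<bar>x\<bar> + \<bar>y\<bar>)) * (1 + ((r*y - x) / sig r)\<^sup>2) / sig r"
proof -
  define S where "S = sig r"
  define A where "A = \<bar>x\<bar> + \<bar>y\<bar>"
  define ps where "ps = (r*x - y) / S"
  define ph where "ph = (r*y - x) / S"
  define u where "u = ph\<^sup>2"
  have S: "0 < S" "S \<le> 1" using sig_pos[OF r] sig_le_1[OF r] by (auto simp: S_def)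
  have u: "0 \<le> u" by (simp add: u_def)
  have "\<bar>r*x - y\<bar> \<le> \<bar>r*x\<bar> + \<bar>y\<bar>" by (rule abs_triangle_ineq4)
  also have "\<bar>r*x\<bar> \<le> \<bar>x\<bar>" using r by (simp add: abs_mult mult_left_le_one_le)
  finally have "\<bar>r*x - y\<bar> \<le> A" by (simp add: A_def)
  then have hps: "\<bar>ps\<bar> \<le> A / S" using S by (simp add: ps_def abs_divide divide_right_mono)
  have hph: "\<bar>ph\<bar> \<le> 1 + u"
  proof (cases "\<bar>ph\<bar> \<le> 1")
    case True then show ?thesis using u by linarith
  next
    case False then have "\<bar>ph\<bar> * 1 \<le> \<bar>ph\<bar> * \<bar>ph\<bar>" by (intro mult_left_mono) auto
    then show ?thesis by (simp add: u_def power2_eq_square abs_mult_self_eq)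
  qed
  have "\<bar>-1 - 2 * r * ps * ph\<bar> \<le> 1 + 2 * r * (\<bar>ps\<bar> * \<bar>ph\<bar>)"
    using abs_triangle_ineq4[of "-1" "2 * r * ps * ph"] r by (simp add: abs_mult)
  also have "\<dots> \<le> 1 + 2 * (\<bar>ps\<bar> * \<bar>ph\<bar>)"
    using r mult_left_le_one_le[of "\<bar>ps\<bar> * \<bar>ph\<bar>" r] by simp
  also have "\<dots> \<le> 1 + 2 * (A / S * (1 + u))"
    using mult_mono[OF hps hph _ abs_ge_zero] S by (simp add: A_def)
  also have "\<dots> \<le> (1 + 2 * A) * (1 + u) / S"
  proof -
    have "S * S \<le> S * (1 + u)" using S u by (intro mult_left_mono) auto
    then show ?thesis using S by (simp add: field_simps algebra_simps)
  qed
  finally show ?thesis by (simp add: S_def A_def ps_def ph_def u_def)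
qed

lemma kdens_bounded:
  assumes r: "0 < r" "r < 1" and M: "0 \<le> M"
    and Q: "gauss x y r * (1 + ((r*y - x) / sig r)\<^sup>2) \<le> M * sig r ^ 5"
  shows "\<bar>kdens x y r\<bar> \<le> 2 * (1 + 2 * (\<bar>x\<bar> + \<bar>y\<bar>)) * M"
proof -
  define S where "S = sig r"
  define L where "L = lam r"
  define A where "A = \<bar>x\<bar> + \<bar>y\<bar>"
  define u where "u = ((r*y - x) / S)\<^sup>2"
  have S: "0 < S" "S \<le> 2 * L" using sig_pos[OF r] sig_le_lam[OF r] by (auto simp: S_def L_def)
  have L: "0 < L" using lam_pos[OF r] by (simp add: L_def)
  have E0: "0 \<le> gauss x y r" by (simp add: gauss_def)
  have A0: "0 \<le> A" by (simp add: A_def)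
  have "\<bar>kdens x y r\<bar> = gauss x y r * \<bar>-1 - 2 * r * ((r*x - y) / S) * ((r*y - x) / S)\<bar> / (S^3 * L)"
    using S L E0 by (simp add: kdens_def S_def L_def abs_mult abs_divide)
  also have "\<dots> \<le> gauss x y r * ((1 + 2 * A) * (1 + u) / S) / (S^3 * L)"
    using S L E0 kdens_factor_le[OF r, of x y]
    by (intro divide_right_mono mult_left_mono) (auto simp: S_def A_def u_def)
  also have "\<dots> = (1 + 2 * A) * (gauss x y r * (1 + u)) / (S^4 * L)"
    using S L by (simp add: field_simps eval_nat_numeral)
  also have "\<dots> \<le> (1 + 2 * A) * (M * S^5) / (S^4 * L)"
    using Q A0 S L by (intro divide_right_mono mult_left_mono) (auto simp: u_def S_def)
  also have "\<dots> = (1 + 2 * A) * M * (S / L)"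
    using S L by (simp add: field_simps eval_nat_numeral)
  also have "\<dots> \<le> (1 + 2 * A) * M * 2"
    using S L A0 M by (intro mult_left_mono) (auto simp: divide_le_eq)
  finally show ?thesis by (simp add: A_def algebra_simps)
qed

lemma hkern_meas[measurable]: "hkern x y \<in> borel_measurable borel"
  unfolding hkern_def[abs_def] gauss_def sig_def lam_def by measurable

lemma kdens_meas[measurable]: "kdens x y \<in> borel_measurable borel"
  unfolding kdens_def[abs_def] gauss_def sig_def lam_def by measurable

lemma kernels_integrable:
  assumes xy: "x \<noteq> y"
  shows "set_integrable lborel {0<..<1} (hkern x y)" "set_integrable lborel {0<..<1} (kdens x y)"
proof -
  obtain M where M: "0 \<le> M" "\<And>r. 0 < r \<Longrightarrow> r < 1 \<Longrightarrow> gauss x y r * (1 + ((r*y - x) / sig r)\<^sup>2) \<le> M * sig r ^ 5"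
    using gauss_moment_bound[OF xy] by blast
  show "set_integrable lborel {0<..<1} (hkern x y)"
    unfolding set_integrable_def
    by (rule integrableI_bounded_set[where A="{0<..<1}" and B="4 * M"])
      (use hkern_bounded[OF _ _ M(1) M(2)] in \<open>auto split: split_indicator\<close>)
  show "set_integrable lborel {0<..<1} (kdens x y)"
    unfolding set_integrable_def
    by (rule integrableI_bounded_set[where A="{0<..<1}" and B="2 * (1 + 2 * (\<bar>x\<bar> + \<bar>y\<bar>)) * M"])
      (use kdens_bounded[OF _ _ M(1) M(2)] in \<open>auto split: split_indicator\<close>)
qed

lemma kernels_diff_cont:
  assumes r: "0 < r" "r < 1"
  shows "isCont (\<lambda>r. hkern x y r - kdens x y r) r"
proof -
  have a: "0 < 1 - r^2" using r by (simp add: abs_square_less_1)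
  have b: "0 < - ln r" using r by simp
  have c: "sqrt (1 - r^2) \<noteq> 0" "sqrt (- ln r) \<noteq> 0" using a b by auto
  show ?thesis unfolding hkern_def[abs_def] kdens_def[abs_def] gauss_def sig_def lam_def
    using r a b c by (intro continuous_intros) auto
qed

lemma prim_bound:
  assumes r: "0 < r" "r < 1"
  shows "\<bar>prim x y r\<bar> \<le> 2 * r * gauss x y r / sig r ^ 2"
proof -
  define S where "S = sig r"
  define L where "L = lam r"
  have S: "0 < S" "S \<le> 1" "S \<le> 2 * L" using sig_pos[OF r] sig_le_1[OF r] sig_le_lam[OF r] by (auto simp: S_def L_def)
  have L: "0 < L" using lam_pos[OF r] by (simp add: L_def)
  have E0: "0 \<le> gauss x y r" by (simp add: gauss_def)
  have "\<bar>prim x y r\<bar> = r * gauss x y r / (S * L)" using r S L E0 by (simp add: prim_def S_def L_def abs_mult abs_divide)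
  also have "\<dots> \<le> r * gauss x y r / (S * (S / 2))" using S L E0 r by (intro divide_left_mono) auto
  also have "\<dots> = 2 * r * gauss x y r / S ^ 2" by (simp add: power2_eq_square)
  finally show ?thesis by (simp add: S_def)
qed

lemma prim_lim_0: "((prim x y) \<longlongrightarrow> 0) (at_right 0)"
proof (rule Lim_null_comparison)
  have ev: "\<forall>\<^sub>F r in at_right 0. r \<in> {0<..<1/2::real}" by (rule eventually_at_right_real) simp
  show "\<forall>\<^sub>F r in at_right 0. norm (prim x y r) \<le> 3 * r"
    using ev
  proof (rule eventually_mono)
    fix r :: real assume "r \<in> {0<..<1/2}"
    then have r: "0 < r" "r < 1" "r < 1/2" by auto
    have "r^2 \<le> (1/2)^2" using r by (intro power_mono) auto
    then have "r^2 \<le> 1/4" by (simp add: power2_eq_square)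
    then have S2: "3/4 \<le> sig r ^ 2" using sig_sq[OF r(1,2)] by simp
    have E1: "gauss x y r \<le> 1" by (simp add: gauss_def)
    have "norm (prim x y r) \<le> 2 * r * gauss x y r / sig r ^ 2" using prim_bound[OF r(1,2)] by simp
    also have "\<dots> \<le> 2 * r * 1 / (3/4)"
      using r E1 S2 by (intro frac_le mult_left_mono) (auto simp: gauss_def)
    also have "\<dots> \<le> 3 * r" using r by simp
    finally show "norm (prim x y r) \<le> 3 * r" .
  qed
  have "((\<lambda>r::real. 3 * r) \<longlongrightarrow> 3 * 0) (at_right 0)"
    by (intro tendsto_intros)
  then show "((\<lambda>r::real. 3 * r) \<longlongrightarrow> 0) (at_right 0)" by simp
qed

lemma sig_lim_1: "(sig \<longlongrightarrow> 0) (at_left 1)"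
proof -
  have "isCont sig 1" unfolding sig_def[abs_def] by (intro continuous_intros)
  then have "(sig \<longlongrightarrow> sig 1) (at 1)" by (simp add: isCont_def)
  then have "(sig \<longlongrightarrow> sig 1) (at_left 1)" by (rule filterlim_mono) (auto simp: at_le)
  then show ?thesis by (simp add: sig_def)
qed

lemma prim_lim_1:
  assumes xy: "x \<noteq> y"
  shows "((prim x y) \<longlongrightarrow> 0) (at_left 1)"
proof (rule Lim_null_comparison)
  define C0 where "C0 = 27648 / \<bar>x - y\<bar> ^ 6"
  have C0: "0 \<le> C0" by (simp add: C0_def)
  define b where "b = 1 - \<bar>x - y\<bar> / (2 * \<bar>y\<bar> + 1)"
  have pos: "0 < 2 * \<bar>y\<bar> + 1" by (simp add: add_pos_nonneg)
  have b1: "b < 1" using xy pos by (simp add: b_def)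
  have ev: "\<forall>\<^sub>F r in at_left 1. r \<in> {max b 0<..<1::real}" by (rule eventually_at_left_real) (use b1 in simp)
  show "\<forall>\<^sub>F r in at_left 1. norm (prim x y r) \<le> 2 * C0 * sig r"
    using ev
  proof (rule eventually_mono)
    fix r :: real assume "r \<in> {max b 0<..<1}"
    then have r: "0 < r" "r < 1" "b < r" by auto
    then have "(1 - r) * (2 * \<bar>y\<bar> + 1) < \<bar>x - y\<bar>" using pos by (simp add: b_def field_simps)
    then have A: "(1 - r) * \<bar>y\<bar> \<le> \<bar>x - y\<bar> / 2" using r by (simp add: algebra_simps)
    define S where "S = sig r"
    have S: "0 < S" "S \<le> 1" using sig_pos[OF r(1,2)] sig_le_1[OF r(1,2)] by (auto simp: S_def)
    have E0: "0 \<le> gauss x y r" by (simp add: gauss_def)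
    have "gauss x y r \<le> gauss x y r * (1 + ((r*y - x) / sig r)\<^sup>2)" using E0 by (simp add: mult_le_cancel_left1)
    also have "\<dots> \<le> C0 * S ^ 6" using gauss_moment_near_one[OF r(1,2) xy A] by (simp add: C0_def S_def)
    finally have E: "gauss x y r \<le> C0 * S ^ 6" .
    have "norm (prim x y r) \<le> 2 * r * gauss x y r / S ^ 2" using prim_bound[OF r(1,2)] by (simp add: S_def)
    also have "\<dots> \<le> 2 * 1 * (C0 * S ^ 6) / S ^ 2"
      using r E E0 S by (intro divide_right_mono mult_mono) auto
    also have "\<dots> = 2 * C0 * S ^ 4" using S by (simp add: field_simps eval_nat_numeral)
    also have "\<dots> \<le> 2 * C0 * S" using S C0 by (intro mult_left_mono) (auto simp: power_le_one eval_nat_numeral mult_le_one)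
    finally show "norm (prim x y r) \<le> 2 * C0 * sig r" by (simp add: S_def)
  qed
  show "((\<lambda>r. 2 * C0 * sig r) \<longlongrightarrow> 0) (at_left 1)"
    using tendsto_mult_left[OF sig_lim_1, of "2 * C0"] by simp
qed

lemma integral_hkern_minus_kdens:
  assumes xy: "x \<noteq> y"
  shows "(LINT r:{0<..<1}|lborel. hkern x y r - kdens x y r) = 0"
proof -
  have int: "set_integrable lborel (einterval (ereal 0) (ereal 1)) (\<lambda>r. hkern x y r - kdens x y r)"
    using set_integral_diff(1)[OF kernels_integrable[OF xy]] by simp
  have "(LBINT r=ereal 0..ereal 1. hkern x y r - kdens x y r) = 0 - 0"
  proof (rule interval_integral_FTC_integrable[where F="prim x y"])
    show "ereal 0 < ereal 1" by simp
    fix r assume "ereal 0 < ereal r" "ereal r < ereal 1"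
    then have r: "0 < r" "r < 1" by auto
    show "(prim x y has_vector_derivative hkern x y r - kdens x y r) (at r)"
      using prim_deriv[OF r] by (simp add: has_real_derivative_iff_has_vector_derivative)
    show "isCont (\<lambda>r. hkern x y r - kdens x y r) r" by (rule kernels_diff_cont[OF r])
  next
    show "set_integrable lborel (einterval (ereal 0) (ereal 1)) (\<lambda>r. hkern x y r - kdens x y r)" by (rule int)
    show "((prim x y \<circ> real_of_ereal) \<longlongrightarrow> 0) (at_right (ereal 0))"
      unfolding ereal_tendsto_simps1 by (rule prim_lim_0)
    show "((prim x y \<circ> real_of_ereal) \<longlongrightarrow> 0) (at_left (ereal 1))"
      unfolding ereal_tendsto_simps1 by (rule prim_lim_1[OF xy])
  qed
  then show ?thesis by (simp add: interval_integral_Ioo)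
qed

lemma rho_integral_density:
  fixes f g :: "real \<Rightarrow> real"
  assumes eq: "\<And>r. 0 < r \<Longrightarrow> r < 1 \<Longrightarrow> dens r * f r = g r"
    and g_int: "set_integrable lborel {0<..<1} g" and g_meas[measurable]: "g \<in> borel_measurable borel"
  shows "integrable rho f" "integral\<^sup>L rho f = (LINT r:{0<..<1}|lborel. g r)"
proof -
  let ?M = "restrict_space lborel {0<..<1::real}"
  have sp: "space ?M = {0<..<1}" by (simp add: space_restrict_space)
  have dm: "dens \<in> borel_measurable ?M"
    unfolding dens_def[abs_def] by (rule measurable_restrict_space1) measurable
  have dnn: "AE r in ?M. 0 \<le> dens r" by (rule AE_I2) (auto simp: sp dens_def)
  have "(\<lambda>r. g r * (r * sqrt (- ln r))) \<in> borel_measurable ?M"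
    by (rule measurable_restrict_space1) measurable
  moreover have "f r = g r * (r * sqrt (- ln r))" if "r \<in> space ?M" for r
    using that eq[of r] by (auto simp: sp dens_def field_simps)
  ultimately have fm: "f \<in> borel_measurable ?M" by (metis (no_types, lifting) measurable_cong)
  have ind: "(\<lambda>r. indicator {0<..<1} r *\<^sub>R (dens r *\<^sub>R f r)) = (\<lambda>r. indicator {0<..<1} r *\<^sub>R g r)"
    using eq by (auto split: split_indicator)
  have rho: "rho = density ?M dens" by (simp add: rho_def dens_def[abs_def])
  have "integrable rho f \<longleftrightarrow> integrable ?M (\<lambda>r. dens r *\<^sub>R f r)"
    by (simp only: rho integrable_density[OF fm dm dnn])
  also have "\<dots> \<longleftrightarrow> integrable lborel (\<lambda>r. indicator {0<..<1} r *\<^sub>R (dens r *\<^sub>R f r))"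
    by (rule integrable_restrict_space) simp
  also have "\<dots> \<longleftrightarrow> integrable lborel (\<lambda>r. indicator {0<..<1} r *\<^sub>R g r)"
    by (simp only: ind)
  finally show "integrable rho f"
    using g_int by (simp add: set_integrable_def)
  have "integral\<^sup>L rho f = integral\<^sup>L ?M (\<lambda>r. dens r *\<^sub>R f r)"
    by (simp only: rho integral_density[OF fm dm dnn])
  also have "\<dots> = integral\<^sup>L lborel (\<lambda>r. indicator {0<..<1} r *\<^sub>R (dens r *\<^sub>R f r))"
    by (rule integral_restrict_space) simp
  also have "\<dots> = (LINT r:{0<..<1}|lborel. g r)"
    by (simp only: ind set_lebesgue_integral_def)
  finally show "integral\<^sup>L rho f = (LINT r:{0<..<1}|lborel. g r)" .
qed

lemma rho_integral_kern:
  assumes xy: "x \<noteq> y"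
  shows "integrable rho (kern x y)" "integral\<^sup>L rho (kern x y) = (LINT r:{0<..<1}|lborel. hkern x y r)"
proof -
  note rho_kern = rho_integral_density[OF kern_density_eq kernels_integrable(2)[OF xy] kdens_meas]
  show "integrable rho (kern x y)" by (rule rho_kern(1))
  have "integral\<^sup>L rho (kern x y) = (LINT r:{0<..<1}|lborel. kdens x y r)" by (rule rho_kern(2))
  also have "\<dots> = (LINT r:{0<..<1}|lborel. hkern x y r) - (LINT r:{0<..<1}|lborel. hkern x y r - kdens x y r)"
    using set_integral_diff(2)[OF kernels_integrable[OF xy]] by simp
  finally show "integral\<^sup>L rho (kern x y) = (LINT r:{0<..<1}|lborel. hkern x y r)"
    using integral_hkern_minus_kdens[OF xy] by simp
qed

lemma abs_rho_integral_kern: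
  assumes xy: "x \<noteq> y"
  shows "ennreal \<bar>\<integral> r. kern x y r \<partial>rho\<bar> = (\<integral>\<^sup>+r. ennreal (indicator {0<..<1} r * hkern x y r) \<partial>lborel)"
proof -
  have int: "integrable lborel (\<lambda>r. indicator {0<..<1} r * hkern x y r)"
    using kernels_integrable(1)[OF xy] by (simp add: set_integrable_def)
  have nn: "0 \<le> (LINT r:{0<..<1}|lborel. hkern x y r)"
    unfolding set_lebesgue_integral_def by (intro integral_nonneg_AE AE_I2) (auto intro: hkern_nonneg split: split_indicator)
  have "(\<integral>\<^sup>+r. ennreal (indicator {0<..<1} r * hkern x y r) \<partial>lborel) = ennreal (integral\<^sup>L lborel (\<lambda>r. indicator {0<..<1} r * hkern x y r))"
    using int by (intro nn_integral_eq_integral) (auto intro!: AE_I2 simp: hkern_nonneg split: split_indicator)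
  then show ?thesis using rho_integral_kern(2)[OF xy] nn by (simp add: set_lebesgue_integral_def)
qed

lemma quartic_tail_right:
  assumes K: "0 \<le> K" and a: "0 < a"
  shows "(\<integral>\<^sup>+v. ennreal (K / v ^ 4) * indicator {a..} v \<partial>lborel) = ennreal (K / (3 * a ^ 3))"
proof -
  have "(\<integral>\<^sup>+v. ennreal (K / v ^ 4) * indicator {a..} v \<partial>lborel) = 0 - (- K / (3 * a ^ 3))"
  proof (rule nn_integral_FTC_atLeast)
    show "(\<lambda>v::real. K / v ^ 4) \<in> borel_measurable borel" by measurable
    fix v :: real assume v: "a \<le> v"
    then have "v \<noteq> 0" using a by auto
    then show "((\<lambda>v. - K / (3 * v ^ 3)) has_real_derivative K / v ^ 4) (at v)"
      by (auto intro!: derivative_eq_intros simp: field_simps eval_nat_numeral)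
    show "0 \<le> K / v ^ 4" using K by simp
  next
    show "((\<lambda>v::real. - K / (3 * v ^ 3)) \<longlongrightarrow> 0) at_top" by real_asymp
  qed
  then show ?thesis by simp
qed

lemma quartic_tail:
  assumes K: "0 \<le> K" and a: "0 < a"
  shows "(\<integral>\<^sup>+v. ennreal (K / v ^ 4) * indicator {v. a \<le> \<bar>v\<bar>} v \<partial>lborel) = ennreal (2 * K / (3 * a ^ 3))"
proof -
  have split: "\<And>v. ennreal (K / v ^ 4) * indicator {v. a \<le> \<bar>v\<bar>} v
      = ennreal (K / v ^ 4) * indicator {a..} v + ennreal (K / v ^ 4) * indicator {..-a} v"
    using a by (auto split: split_indicator)
  have neg: "(\<integral>\<^sup>+v. ennreal (K / v ^ 4) * indicator {..-a} v \<partial>lborel)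
      = (\<integral>\<^sup>+v. ennreal (K / v ^ 4) * indicator {a..} v \<partial>lborel)"
  proof -
    have "(\<integral>\<^sup>+v. ennreal (K / v ^ 4) * indicator {..-a} v \<partial>lborel)
        = (\<integral>\<^sup>+v. ennreal (K / (0 + -1 * v) ^ 4) * indicator {..-a} (0 + -1 * v) \<partial>lborel)"
      using nn_integral_real_affine[of "\<lambda>v. ennreal (K / v ^ 4) * indicator {..-a} v" "-1" 0] by simp
    also have "\<dots> = (\<integral>\<^sup>+v. ennreal (K / v ^ 4) * indicator {a..} v \<partial>lborel)"
      by (intro nn_integral_cong) (auto split: split_indicator)
    finally show ?thesis .
  qed
  have "(\<integral>\<^sup>+v. ennreal (K / v ^ 4) * indicator {v. a \<le> \<bar>v\<bar>} v \<partial>lborel)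
     = (\<integral>\<^sup>+v. ennreal (K / v ^ 4) * indicator {a..} v \<partial>lborel) + (\<integral>\<^sup>+v. ennreal (K / v ^ 4) * indicator {..-a} v \<partial>lborel)"
    unfolding split by (rule nn_integral_add) auto
  also have "\<dots> = ennreal (K / (3 * a ^ 3)) + ennreal (K / (3 * a ^ 3))"
    unfolding neg quartic_tail_right[OF K a] ..
  also have "\<dots> = ennreal (2 * K / (3 * a ^ 3))"
    using K a by (simp flip: ennreal_plus)
  finally show ?thesis .
qed

lemma nn_integral_lborel_translate:
  fixes f :: "real \<Rightarrow> ennreal" and m :: real
  assumes [measurable]: "f \<in> borel_measurable borel"
  shows "(\<integral>\<^sup>+x. f (x - m) \<partial>lborel) = (\<integral>\<^sup>+v. f v \<partial>lborel)"
proof -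
  have "(\<integral>\<^sup>+x. f (x - m) \<partial>lborel) = (\<integral>\<^sup>+x. f ((m + 1 * x) - m) \<partial>lborel)"
    using nn_integral_real_affine[of "\<lambda>x. f (x - m)" 1 m] by simp
  then show ?thesis by simp
qed

lemma gauss_le_quartic:
  fixes S v :: real
  assumes S: "0 < S" and v: "v \<noteq> 0"
  shows "exp (- (v / S)\<^sup>2) \<le> 4 * S ^ 4 / v ^ 4"
proof -
  define w where "w = (v / S)\<^sup>2"
  have "v / S \<noteq> 0" using S v by simp
  then have w: "0 < w" by (simp add: w_def)
  have "exp (- w) * w ^ 2 \<le> 4" using exp_pow_bound[of w 2] w by simp
  then have "exp (- w) \<le> 4 / w ^ 2" using w by (simp add: field_simps)
  also have "4 / w ^ 2 = 4 * S ^ 4 / v ^ 4" using S v by (simp add: w_def power_divide field_simps flip: power_mult)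
  finally show ?thesis by (simp add: w_def)
qed

lemma gauss_tail:
  fixes S a m :: real
  assumes S: "0 < S" and a: "0 < a"
  shows "(\<integral>\<^sup>+x. ennreal (exp (- ((m - x) / S)\<^sup>2)) * indicator {x. a \<le> \<bar>x - m\<bar>} x \<partial>lborel)
      \<le> ennreal (8 * S ^ 4 / (3 * a ^ 3))"
proof -
  have "(\<integral>\<^sup>+x. ennreal (exp (- ((m - x) / S)\<^sup>2)) * indicator {x. a \<le> \<bar>x - m\<bar>} x \<partial>lborel)
     \<le> (\<integral>\<^sup>+x. ennreal (4 * S ^ 4 / (x - m) ^ 4) * indicator {v. a \<le> \<bar>v\<bar>} (x - m) \<partial>lborel)"
  proof (intro nn_integral_mono)
    fix x
    show "ennreal (exp (- ((m - x) / S)\<^sup>2)) * indicator {x. a \<le> \<bar>x - m\<bar>} x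
        \<le> ennreal (4 * S ^ 4 / (x - m) ^ 4) * indicator {v. a \<le> \<bar>v\<bar>} (x - m)"
    proof (cases "a \<le> \<bar>x - m\<bar>")
      case True
      then have "x - m \<noteq> 0" using a by auto
      then have "exp (- ((x - m) / S)\<^sup>2) \<le> 4 * S ^ 4 / (x - m) ^ 4" by (rule gauss_le_quartic[OF S])
      moreover have "((m - x) / S)\<^sup>2 = ((x - m) / S)\<^sup>2" by (simp add: power2_eq_square algebra_simps)
      ultimately show ?thesis using True by (auto intro: ennreal_leI)
    qed auto
  qed
  also have "\<dots> = (\<integral>\<^sup>+v. ennreal (4 * S ^ 4 / v ^ 4) * indicator {v. a \<le> \<bar>v\<bar>} v \<partial>lborel)"
    by (rule nn_integral_lborel_translate[where f="\<lambda>v. ennreal (4 * S ^ 4 / v ^ 4) * indicator {v. a \<le> \<bar>v\<bar>} v"]) measurable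
  also have "\<dots> = ennreal (2 * (4 * S ^ 4) / (3 * a ^ 3))"
    by (rule quartic_tail) (use a in auto)
  finally show ?thesis by simp
qed

lemma gauss_integral_le:
  fixes S m :: real
  assumes S: "0 < S"
  shows "(\<integral>\<^sup>+x. ennreal (exp (- ((m - x) / S)\<^sup>2)) \<partial>lborel) \<le> ennreal (5 * S)"
proof -
  have "(\<integral>\<^sup>+x. ennreal (exp (- ((m - x) / S)\<^sup>2)) \<partial>lborel)
     \<le> (\<integral>\<^sup>+x. indicator {m - S..m + S} x + ennreal (exp (- ((m - x) / S)\<^sup>2)) * indicator {x. S \<le> \<bar>x - m\<bar>} x \<partial>lborel)"
  proof (intro nn_integral_mono)
    fix x
    show "ennreal (exp (- ((m - x) / S)\<^sup>2))
        \<le> indicator {m - S..m + S} x + ennreal (exp (- ((m - x) / S)\<^sup>2)) * indicator {x. S \<le> \<bar>x - m\<bar>} x"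
      by (cases "S \<le> \<bar>x - m\<bar>") (auto split: split_indicator simp: abs_le_iff)
  qed
  also have "\<dots> = (\<integral>\<^sup>+x. indicator {m - S..m + S} x \<partial>lborel)
      + (\<integral>\<^sup>+x. ennreal (exp (- ((m - x) / S)\<^sup>2)) * indicator {x. S \<le> \<bar>x - m\<bar>} x \<partial>lborel)"
    by (rule nn_integral_add) auto
  also have "\<dots> \<le> ennreal (2 * S) + ennreal (8 * S ^ 4 / (3 * S ^ 3))"
    using S by (intro add_mono gauss_tail) auto
  also have "\<dots> \<le> ennreal (5 * S)"
    using S by (simp flip: ennreal_plus add: eval_nat_numeral)
  finally show ?thesis .
qed

lemma hkern_x_integral_le:
  assumes r: "0 < r" "r < 1"
  shows "(\<integral>\<^sup>+x. ennreal (hkern x y r) * indicator A x \<partial>lborel) \<le> ennreal (3 / ((1 - r) * sqrt (1 - r)))"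
proof -
  define S where "S = sig r"
  define L where "L = lam r"
  have S: "0 < S" using sig_pos[OF r] by (simp add: S_def)
  have L: "0 < L" using lam_pos[OF r] by (simp add: L_def)
  have "(\<integral>\<^sup>+x. ennreal (hkern x y r) * indicator A x \<partial>lborel) \<le> (\<integral>\<^sup>+x. ennreal (1 / (2 * S * L ^ 3)) * ennreal (exp (- ((r * y - x) / S)\<^sup>2)) \<partial>lborel)"
  proof (intro nn_integral_mono)
    fix x
    have "ennreal (1 / (2 * S * L ^ 3)) * ennreal (exp (- ((r * y - x) / S)\<^sup>2)) = ennreal (hkern x y r)"
      using S L by (simp add: hkern_def gauss_def S_def L_def flip: ennreal_mult)
    then show "ennreal (hkern x y r) * indicator A x \<le> ennreal (1 / (2 * S * L ^ 3)) * ennreal (exp (- ((r * y - x) / S)\<^sup>2))"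
      by (simp split: split_indicator)
  qed
  also have "\<dots> = ennreal (1 / (2 * S * L ^ 3)) * (\<integral>\<^sup>+x. ennreal (exp (- ((r * y - x) / S)\<^sup>2)) \<partial>lborel)"
    by (rule nn_integral_cmult) measurable
  also have "\<dots> \<le> ennreal (1 / (2 * S * L ^ 3)) * ennreal (5 * S)"
    by (intro mult_left_mono gauss_integral_le S) auto
  also have "\<dots> = ennreal (5 / (2 * L ^ 3))"
    using S L by (simp flip: ennreal_mult add: field_simps)
  also have "\<dots> \<le> ennreal (3 / ((1 - r) * sqrt (1 - r)))"
  proof (rule ennreal_leI)
    have q: "0 < 1 - r" using r by simp
    have "sqrt (1 - r) \<le> sqrt (L ^ 2)" by (rule real_sqrt_le_mono) (use lam_sq_ge[OF r] in \<open>simp add: L_def\<close>)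
    then have sL: "sqrt (1 - r) \<le> L" using L by simp
    have "(1 - r) * sqrt (1 - r) \<le> L ^ 2 * L"
      using lam_sq_ge[OF r] sL q by (intro mult_mono) (auto simp: L_def)
    then have "(1 - r) * sqrt (1 - r) \<le> L ^ 3" by (simp add: eval_nat_numeral)
    then have "5 / (2 * L ^ 3) \<le> 5 / (2 * ((1 - r) * sqrt (1 - r)))"
      using q L by (intro divide_left_mono mult_left_mono mult_pos_pos) auto
    also have "\<dots> \<le> 3 / ((1 - r) * sqrt (1 - r))" using q by (simp add: field_simps)
    finally show "5 / (2 * L ^ 3) \<le> 3 / ((1 - r) * sqrt (1 - r))" .
  qed
  finally show ?thesis .
qed

lemma centre_far_from_complement:
  assumes r: "0 < r" "r < 1" and s: "0 < s" "s \<le> 1" "s * \<bar>c\<bar> \<le> 1"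
    and y: "\<bar>c - y\<bar> < s" and rr: "1 - r \<le> s\<^sup>2 / 8" and x: "x \<notin> ball c (2 * s)"
  shows "s / 2 \<le> \<bar>x - r * y\<bar>"
proof -
  have xc: "2 * s \<le> \<bar>c - x\<bar>" using x by (simp add: dist_real_def)
  have "\<bar>y\<bar> \<le> \<bar>c\<bar> + s" using y by linarith
  then have "(1 - r) * \<bar>y\<bar> \<le> s\<^sup>2 / 8 * (\<bar>c\<bar> + s)"
    using rr r by (intro mult_mono) auto
  also have "\<dots> = s * (s * \<bar>c\<bar>) / 8 + s * s * s / 8" by (simp add: power2_eq_square algebra_simps)
  also have "\<dots> \<le> s * 1 / 8 + s * 1 * 1 / 8"
    using s by (intro add_mono divide_right_mono mult_mono) auto
  finally have "(1 - r) * \<bar>y\<bar> \<le> s / 4" by simp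
  moreover have "y - r * y = (1 - r) * y" by algebra
  then have "\<bar>y - r * y\<bar> = (1 - r) * \<bar>y\<bar>" using r by (simp add: abs_mult)
  ultimately show ?thesis using xc y by linarith
qed

lemma hkern_x_integral_far_le:
  assumes r: "0 < r" "r < 1" and s: "0 < s" "s \<le> 1" "s * \<bar>c\<bar> \<le> 1"
    and y: "\<bar>c - y\<bar> < s" and rr: "1 - r \<le> s\<^sup>2 / 8"
  shows "(\<integral>\<^sup>+x. ennreal (hkern x y r) * indicator (- ball c (2 * s)) x \<partial>lborel) \<le> ennreal (86 / s ^ 3)"
proof -
  define S where "S = sig r"
  define L where "L = lam r"
  have S: "0 < S" using sig_pos[OF r] by (simp add: S_def)
  have L: "0 < L" using lam_pos[OF r] by (simp add: L_def)
  have SL: "S \<le> 2 * L" using sig_le_lam[OF r] by (simp add: S_def L_def)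
  have "(\<integral>\<^sup>+x. ennreal (hkern x y r) * indicator (- ball c (2 * s)) x \<partial>lborel)
     \<le> (\<integral>\<^sup>+x. ennreal (1 / (2 * S * L ^ 3)) * (ennreal (exp (- ((r * y - x) / S)\<^sup>2)) * indicator {x. s / 2 \<le> \<bar>x - r * y\<bar>} x) \<partial>lborel)"
  proof (intro nn_integral_mono)
    fix x
    show "ennreal (hkern x y r) * indicator (- ball c (2 * s)) x
       \<le> ennreal (1 / (2 * S * L ^ 3)) * (ennreal (exp (- ((r * y - x) / S)\<^sup>2)) * indicator {x. s / 2 \<le> \<bar>x - r * y\<bar>} x)"
    proof -
      have "ennreal (1 / (2 * S * L ^ 3)) * ennreal (exp (- ((r * y - x) / S)\<^sup>2)) = ennreal (hkern x y r)"
        using S L by (simp add: hkern_def gauss_def S_def L_def flip: ennreal_mult)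
      then show ?thesis using centre_far_from_complement[OF r s y rr, of x] by (auto split: split_indicator)
    qed
  qed
  also have "\<dots> = ennreal (1 / (2 * S * L ^ 3)) * (\<integral>\<^sup>+x. ennreal (exp (- ((r * y - x) / S)\<^sup>2)) * indicator {x. s / 2 \<le> \<bar>x - r * y\<bar>} x \<partial>lborel)"
    by (rule nn_integral_cmult) measurable
  also have "\<dots> \<le> ennreal (1 / (2 * S * L ^ 3)) * ennreal (8 * S ^ 4 / (3 * (s / 2) ^ 3))"
    using s by (intro mult_left_mono gauss_tail S) auto
  also have "\<dots> = ennreal (32 * S ^ 3 / (3 * s ^ 3 * L ^ 3))"
    using S L s by (simp flip: ennreal_mult add: field_simps eval_nat_numeral)
  also have "\<dots> \<le> ennreal (86 / s ^ 3)"
  proof (rule ennreal_leI)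
    have "S ^ 3 \<le> (2 * L) ^ 3" using S SL by (intro power_mono) auto
    then have "S ^ 3 \<le> 8 * L ^ 3" by (simp add: power_mult_distrib)
    then have "32 * S ^ 3 / (3 * s ^ 3 * L ^ 3) \<le> 32 * (8 * L ^ 3) / (3 * s ^ 3 * L ^ 3)"
      using s L by (intro divide_right_mono) auto
    also have "\<dots> = 256 / (3 * s ^ 3)" using L by (simp add: field_simps)
    also have "\<dots> \<le> 86 / s ^ 3" using s by (simp add: field_simps)
    finally show "32 * S ^ 3 / (3 * s ^ 3 * L ^ 3) \<le> 86 / s ^ 3" .
  qed
  finally show ?thesis .
qed

lemma hkern_x_integral_bound:
  assumes s: "0 < s" "s \<le> 1" "s * \<bar>c\<bar> \<le> 1" and y: "\<bar>c - y\<bar> < s"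
  shows "(\<integral>\<^sup>+x. ennreal (indicator {0<..<1} r * hkern x y r) * indicator (- ball c (2 * s)) x \<partial>lborel)
     \<le> ennreal (3 / ((1 - r) * sqrt (1 - r))) * indicator {0..1 - s\<^sup>2/8} r + ennreal (86 / s ^ 3) * indicator {1 - s\<^sup>2/8..1} r"
proof (cases "0 < r \<and> r < 1")
  case False
  then have z: "(\<lambda>x. ennreal (indicator {0<..<1} r * hkern x y r) * indicator (- ball c (2 * s)) x) = (\<lambda>x. 0)"
    by (intro ext) (auto split: split_indicator)
  show ?thesis unfolding z by simp
next
  case True
  then have r: "0 < r" "r < 1" by auto
  have eq: "(\<integral>\<^sup>+x. ennreal (indicator {0<..<1} r * hkern x y r) * indicator (- ball c (2 * s)) x \<partial>lborel)
      = (\<integral>\<^sup>+x. ennreal (hkern x y r) * indicator (- ball c (2 * s)) x \<partial>lborel)"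
    using r by (intro nn_integral_cong) (simp split: split_indicator)
  show ?thesis
  proof (cases "s\<^sup>2/8 \<le> 1 - r")
    case True
    then have "indicator {0..1 - s\<^sup>2/8} r = (1::ennreal)" using r by (simp split: split_indicator)
    then show ?thesis unfolding eq using hkern_x_integral_le[OF r, of y "- ball c (2 * s)"]
      by (simp add: add_increasing2)
  next
    case False
    then have "indicator {1 - s\<^sup>2/8..1} r = (1::ennreal)" using r by (simp split: split_indicator)
    moreover have "1 - r \<le> s\<^sup>2/8" using False by simp
    ultimately show ?thesis unfolding eq using hkern_x_integral_far_le[OF r s y]
      by (simp add: add_increasing)
  qed
qed

lemma singular_r_integral_le:
  assumes d: "0 < \<delta>" "\<delta> < 1"
  shows "(\<integral>\<^sup>+r. ennreal (3 / ((1 - r) * sqrt (1 - r))) * indicator {0..1-\<delta>} r \<partial>lborel) \<le> ennreal (6 / sqrt \<delta>)"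
proof -
  let ?f = "\<lambda>r::real. 3 / ((1 - r) * sqrt (1 - r))"
  let ?F = "\<lambda>r::real. 6 / sqrt (1 - r)"
  have hb: "has_bochner_integral lborel (\<lambda>r. ?f r * indicator {0..1-\<delta>} r) (?F (1-\<delta>) - ?F 0)"
  proof (rule has_bochner_integral_FTC_Icc_real)
    show "0 \<le> 1 - \<delta>" using d by simp
    fix r :: real assume r: "0 \<le> r" "r \<le> 1 - \<delta>"
    then have q: "0 < 1 - r" using d by simp
    then show "(?F has_real_derivative ?f r) (at r)"
      by (auto intro!: derivative_eq_intros simp: field_simps power2_eq_square)
    show "isCont ?f r" using q by (intro continuous_intros) auto
  qed
  have "(\<integral>\<^sup>+r. ennreal (?f r) * indicator {0..1-\<delta>} r \<partial>lborel) = (\<integral>\<^sup>+r. ennreal (?f r * indicator {0..1-\<delta>} r) \<partial>lborel)"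
    by (intro nn_integral_cong) (simp split: split_indicator)
  also have "\<dots> = ennreal (?F (1-\<delta>) - ?F 0)"
  proof -
    have "(\<integral>\<^sup>+r. ennreal (?f r * indicator {0..1-\<delta>} r) \<partial>lborel) = ennreal (integral\<^sup>L lborel (\<lambda>r. ?f r * indicator {0..1-\<delta>} r))"
      using hb d by (intro nn_integral_eq_integral) (auto simp: has_bochner_integral_iff split: split_indicator)
    then show ?thesis using hb by (simp add: has_bochner_integral_iff)
  qed
  also have "\<dots> \<le> ennreal (6 / sqrt \<delta>)" using d by (intro ennreal_leI) simp
  finally show ?thesis .
qed

lemma outer_integral_swap:
  assumes A[measurable]: "A \<in> sets borel" and y: "y \<notin> A"
  shows "(\<integral>\<^sup>+ x \<in> A. ennreal \<bar>\<integral> r. kern x y r \<partial>rho\<bar> \<partial>lborel)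
    = (\<integral>\<^sup>+ r. (\<integral>\<^sup>+x. ennreal (indicator {0<..<1} r * hkern x y r) * indicator A x \<partial>lborel) \<partial>lborel)"
proof -
  let ?f = "\<lambda>x r. ennreal (indicator {0<..<1} r * hkern x y r) * indicator A x"
  have meas: "case_prod ?f \<in> borel_measurable (lborel \<Otimes>\<^sub>M lborel)"
    unfolding hkern_def gauss_def sig_def lam_def by measurable
  have "(\<integral>\<^sup>+ x \<in> A. ennreal \<bar>\<integral> r. kern x y r \<partial>rho\<bar> \<partial>lborel)
      = (\<integral>\<^sup>+ x. (\<integral>\<^sup>+r. ennreal (indicator {0<..<1} r * hkern x y r) \<partial>lborel) * indicator A x \<partial>lborel)"
  proof (intro nn_integral_cong)
    fix x
    have "x \<in> A \<Longrightarrow> x \<noteq> y" using y by auto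
    then show "ennreal \<bar>\<integral> r. kern x y r \<partial>rho\<bar> * indicator A x
        = (\<integral>\<^sup>+r. ennreal (indicator {0<..<1} r * hkern x y r) \<partial>lborel) * indicator A x"
      by (auto simp: abs_rho_integral_kern split: split_indicator)
  qed
  also have "\<dots> = (\<integral>\<^sup>+ x. (\<integral>\<^sup>+r. ?f x r \<partial>lborel) \<partial>lborel)"
    by (intro nn_integral_cong nn_integral_multc[symmetric]) measurable
  also have "\<dots> = (\<integral>\<^sup>+ r. (\<integral>\<^sup>+x. ?f x r \<partial>lborel) \<partial>lborel)"
    by (rule lborel_pair.Fubini'[OF meas, symmetric])
  finally show ?thesis .
qed

lemma outer_integral_le:
  assumes s: "0 < s" "s \<le> 1" "s * \<bar>c\<bar> \<le> 1" and y: "\<bar>c - y\<bar> < s"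
  shows "(\<integral>\<^sup>+ x \<in> - ball c (2 * s). ennreal \<bar>\<integral> r. kern x y r \<partial>rho\<bar> \<partial>lborel)
    \<le> ennreal (6 / sqrt (s\<^sup>2/8) + 86 / s ^ 3 * (s\<^sup>2/8))"
proof -
  define \<delta> where "\<delta> = s\<^sup>2 / 8"
  have "s\<^sup>2 \<le> 1" using s by (simp add: power_le_one)
  then have d: "0 < \<delta>" "\<delta> < 1" using s by (auto simp: \<delta>_def)
  have "y \<notin> - ball c (2 * s)" using y s by (simp add: dist_real_def)
  then have "(\<integral>\<^sup>+ x \<in> - ball c (2 * s). ennreal \<bar>\<integral> r. kern x y r \<partial>rho\<bar> \<partial>lborel)
      = (\<integral>\<^sup>+ r. (\<integral>\<^sup>+x. ennreal (indicator {0<..<1} r * hkern x y r) * indicator (- ball c (2 * s)) x \<partial>lborel) \<partial>lborel)"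
    by (intro outer_integral_swap) auto
  also have "\<dots> \<le> (\<integral>\<^sup>+ r. ennreal (3 / ((1 - r) * sqrt (1 - r))) * indicator {0..1 - \<delta>} r
      + ennreal (86 / s ^ 3) * indicator {1 - \<delta>..1} r \<partial>lborel)"
    unfolding \<delta>_def by (intro nn_integral_mono hkern_x_integral_bound s y)
  also have "\<dots> = (\<integral>\<^sup>+ r. ennreal (3 / ((1 - r) * sqrt (1 - r))) * indicator {0..1 - \<delta>} r \<partial>lborel)
      + (\<integral>\<^sup>+ r. ennreal (86 / s ^ 3) * indicator {1 - \<delta>..1} r \<partial>lborel)"
    by (rule nn_integral_add) auto
  also have "\<dots> \<le> ennreal (6 / sqrt \<delta>) + ennreal (86 / s ^ 3 * \<delta>)"
    using singular_r_integral_le[OF d] d s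
    by (intro add_mono) (simp_all add: nn_integral_cmult_indicator emeasure_lborel_Icc flip: ennreal_mult)
  also have "\<dots> = ennreal (6 / sqrt \<delta> + 86 / s ^ 3 * \<delta>)"
    using s d by (simp flip: ennreal_plus)
  finally show ?thesis by (simp add: \<delta>_def)
qed

lemma scaled_outer_bound_le:
  assumes s: "0 < s"
  shows "s * (6 / sqrt (s\<^sup>2/8) + 86 / s ^ 3 * (s\<^sup>2/8)) \<le> 30"
proof -
  have "sqrt (s\<^sup>2/8) = s / sqrt 8" using s by (simp add: real_sqrt_divide)
  then have "s * (6 / sqrt (s\<^sup>2/8)) = 6 * sqrt 8" using s by simp
  also have "\<dots> \<le> 18" using real_le_lsqrt[of 3 8] by simp
  finally have first: "s * (6 / sqrt (s\<^sup>2/8)) \<le> 18" .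
  have second: "s * (86 / s ^ 3 * (s\<^sup>2/8)) = 86 / 8" using s by (simp add: field_simps eval_nat_numeral)
  show ?thesis unfolding distrib_left using first second by linarith
qed

theorem mainTheorem4:
  shows "\<exists>C::real. \<forall>c s y. admissible c s \<longrightarrow> y \<in> ball c s \<longrightarrow>
     (\<forall>x. x \<notin> ball c (2 * s) \<longrightarrow> integrable rho (kern x y)) \<and>
     ennreal s * (\<integral>\<^sup>+ x \<in> - ball c (2 * s). ennreal \<bar>\<integral> r. kern x y r \<partial>rho\<bar> \<partial>lborel)
       \<le> ennreal C"
proof (intro exI[of _ 30] allI impI conjI)
  fix c s y x :: real
  assume "admissible c s" "y \<in> ball c s" "x \<notin> ball c (2 * s)"
  then have "x \<noteq> y" by (auto simp: admissible_def dist_real_def)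
  then show "integrable rho (kern x y)" by (rule rho_integral_kern(1))
next
  fix c s y :: real
  assume "admissible c s" and "y \<in> ball c s"
  then have s: "0 < s" "s \<le> 1" "s * \<bar>c\<bar> \<le> 1" and y: "\<bar>c - y\<bar> < s"
    by (auto simp: admissible_def dist_real_def)
  have "ennreal s * (\<integral>\<^sup>+ x \<in> - ball c (2 * s). ennreal \<bar>\<integral> r. kern x y r \<partial>rho\<bar> \<partial>lborel)
      \<le> ennreal s * ennreal (6 / sqrt (s\<^sup>2/8) + 86 / s ^ 3 * (s\<^sup>2/8))"
    by (intro mult_left_mono outer_integral_le s y) simp
  also have "\<dots> = ennreal (s * (6 / sqrt (s\<^sup>2/8) + 86 / s ^ 3 * (s\<^sup>2/8)))"
    using s by (intro ennreal_mult[symmetric]) auto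
  also have "\<dots> \<le> ennreal 30"
    by (intro ennreal_leI scaled_outer_bound_le s)
  finally show "ennreal s * (\<integral>\<^sup>+ x \<in> - ball c (2 * s). ennreal \<bar>\<integral> r. kern x y r \<partial>rho\<bar> \<partial>lborel)
      \<le> ennreal 30" .
qed

end
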